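(* With notation as in the context, for every $\sigma\in\mathcal S_\ell$ and every choice of indices $r_1,\dots,r_\ell\in\{1,\dots,\ell\}$, $$\langle\alpha_{1r_1}\alpha_{2r_2}\cdots\alpha_{\ell r_\ell},\,z_\sigma\rangle=\begin{cases}\pm1,&\text{if } r_j=\sigma(j)\text{ for all }j,\\ 0,&\text{otherwise.}\end{cases}$$
   Context: $T$ is a finite tree with essential vertices (degree $\ge3$) $v_1,\dots,v_m$, and $1\le\ell\le m$. $\mathcal C^kX$ denotes the ordered configuration space $\{(x_1,\dots,x_k)\in X^k: x_i\neq x_j\ (i\ne j)\}$. For each $i$, $Y_i\subset T$ is a $Y$-graph (tree with one degree-$3$ vertex and three leaves) embedded in a small neighborhood of $v_i$, centered at $v_i$, with $Y_i\cap Y_j=\emptyset$ for $i\ne j$; $\mathcal C^2Y_i\simeq S^1$. Let $\alpha_i\in H^1(\mathcal C^2T;\mathbb Z)$ be classes whose restriction to $\mathcal C^2Y_j$ is $\delta_{ij}$ times a fixed generator $g_j$ of $H^1(\mathcal C^2Y_j)\cong\mathbb Z$. Define $\Psi:\prod_{j=1}^\ell\mathcal C^2Y_j\to\mathcal C^{2\ell}T$, $\Psi((x_1,x_2),\dots,(x_{2\ell-1},x_{2\ell}))=(x_1,\dots,x_{2\ell})$, and $\Phi_i:\mathcal C^{2\ell}T\to\mathcal C^2T$, $\Phi_i(x_1,\dots,x_{2\ell})=(x_{2i-1},x_{2i})$; set $\alpha_{ij}=\Phi_i^*(\alpha_j)\in H^1(\mathcal C^{2\ell}T)$ for $i,j\in\{1,\dots,\ell\}$.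 Let $t$ be the top homology class of the torus $\prod_{j=1}^\ell\mathcal C^2Y_j$ with $\langle \mathrm{pr}_1^*g_1\cdots\mathrm{pr}_\ell^*g_\ell,t\rangle=1$, and $z=\Psi_*(t)\in H_\ell(\mathcal C^{2\ell}T)$. For $\sigma\in\mathcal S_\ell$, $g_\sigma:\mathcal C^{2\ell}T\to\mathcal C^{2\ell}T$ is $g_\sigma(x_1,\dots,x_{2\ell})=(x_{2\sigma(1)-1},x_{2\sigma(1)},\dots,x_{2\sigma(\ell)-1},x_{2\sigma(\ell)})$, and $z_\sigma=(g_\sigma)_*(z)$. *)

theory Defs
  imports "HOL-Homology.Homology" "HOL-Combinatorics.Permutations"
begin

definition adj :: "'v set set \<Rightarrow> 'v \<Rightarrow> 'v \<Rightarrow> bool" where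
  "adj E u w \<longleftrightarrow> {u, w} \<in> E \<and> u \<noteq> w"

definition graph_connected :: "'v set \<Rightarrow> 'v set set \<Rightarrow> bool" where
  "graph_connected V E \<longleftrightarrow>
     (\<forall>u\<in>V. \<forall>w\<in>V. (u, w) \<in> {(a, b). adj E a b}\<^sup>*)"

definition graph_acyclic :: "'v set \<Rightarrow> 'v set set \<Rightarrow> bool" where
  "graph_acyclic V E \<longleftrightarrow>
     \<not> (\<exists>xs. length xs \<ge> 3 \<and> distinct xs \<and> set xs \<subseteq> V
            \<and> (\<forall>i < length xs - 1. adj E (xs ! i) (xs ! Suc i))
            \<and> adj E (last xs) (hd xs))"

definition vdegree :: "'v set set \<Rightarrow> 'v \<Rightarrow> nat" where
  "vdegree E v = card {e \<in> E. v \<in> e}"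

definition geometric_tree :: "'v set \<Rightarrow> 'v set set \<Rightarrow> ('v \<Rightarrow> 'e::euclidean_space) \<Rightarrow> bool" where
  "geometric_tree V E pos \<longleftrightarrow>
     finite V \<and> V \<noteq> {} \<and>
     (\<forall>e\<in>E. \<exists>u w. e = {u, w} \<and> u \<in> V \<and> w \<in> V \<and> u \<noteq> w) \<and>
     graph_connected V E \<and> graph_acyclic V E \<and>
     inj_on pos V \<and>
     (\<forall>u w. {u, w} \<in> E \<longrightarrow> (\<forall>x\<in>V. pos x \<in> closed_segment (pos u) (pos w) \<longrightarrow> x = u \<or> x = w)) \<and>
     (\<forall>u w u' w'. {u, w} \<in> E \<longrightarrow> {u', w'} \<in> E \<longrightarrow> {u, w} \<noteq> {u', w'} \<longrightarrow>
        closed_segment (pos u) (pos w) \<inter> closed_segment (pos u') (pos w')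
          \<subseteq> pos ` ({u, w} \<inter> {u', w'}))"

definition realisation :: "'v set set \<Rightarrow> ('v \<Rightarrow> 'e::euclidean_space) \<Rightarrow> 'e set" where
  "realisation E pos = (\<Union>{closed_segment (pos u) (pos w) | u w. {u, w} \<in> E})"

definition Y_graph_at :: "'v set set \<Rightarrow> ('v \<Rightarrow> 'e::euclidean_space) \<Rightarrow> 'v \<Rightarrow> 'e set \<Rightarrow> bool" where
  "Y_graph_at E pos v Y \<longleftrightarrow>
     (\<exists>w1 w2 w3 q1 q2 q3. distinct [w1, w2, w3] \<and>
        {v, w1} \<in> E \<and> {v, w2} \<in> E \<and> {v, w3} \<in> E \<and>
        q1 \<in> open_segment (pos v) (pos w1) \<and>
        q2 \<in> open_segment (pos v) (pos w2) \<and>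
        q3 \<in> open_segment (pos v) (pos w3) \<and>
        Y = closed_segment (pos v) q1 \<union> closed_segment (pos v) q2 \<union> closed_segment (pos v) q3)"

text \<open>Points of X^k are functions on the index set {1..k} (extensional).\<close>
definition conf :: "nat \<Rightarrow> 'a topology \<Rightarrow> (nat \<Rightarrow> 'a) topology" where
  "conf k X = subtopology (product_topology (\<lambda>i. X) {1..k})
                 {x. \<forall>i\<in>{1..k}. \<forall>j\<in>{1..k}. i \<noteq> j \<longrightarrow> x i \<noteq> x j}"

type_synonym 'a cochain = "((nat \<Rightarrow> real) \<Rightarrow> 'a) \<Rightarrow> int"

text \<open>Coboundary of a (p-1)-cochain, evaluated on a p-simplex.\<close>
definition coboundary :: "nat \<Rightarrow> 'a cochain \<Rightarrow> 'a cochain" where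
  "coboundary p \<phi> \<sigma> = (\<Sum>k\<le>p. (-1) ^ k * \<phi> (singular_face p k \<sigma>))"

definition cocycle :: "nat \<Rightarrow> 'a topology \<Rightarrow> 'a cochain \<Rightarrow> bool" where
  "cocycle p X \<phi> \<longleftrightarrow> (\<forall>\<sigma>. singular_simplex (Suc p) X \<sigma> \<longrightarrow> coboundary (Suc p) \<phi> \<sigma> = 0)"

definition cohomologous :: "nat \<Rightarrow> 'a topology \<Rightarrow> 'a cochain \<Rightarrow> 'a cochain \<Rightarrow> bool" where
  "cohomologous p X \<phi> \<psi> \<longleftrightarrow>
     (\<exists>\<beta>. \<forall>\<sigma>. singular_simplex p X \<sigma> \<longrightarrow> \<phi> \<sigma> - \<psi> \<sigma> = coboundary p \<beta> \<sigma>)"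

text \<open>[g] generates H^1(X;Z) and H^1(X;Z) is infinite cyclic.\<close>
definition generator_H1 :: "'a topology \<Rightarrow> 'a cochain \<Rightarrow> bool" where
  "generator_H1 X g \<longleftrightarrow> cocycle 1 X g \<and>
     (\<forall>\<phi>. cocycle 1 X \<phi> \<longrightarrow> (\<exists>n::int. cohomologous 1 X \<phi> (\<lambda>\<sigma>. n * g \<sigma>))) \<and>
     (\<forall>n::int. cohomologous 1 X (\<lambda>\<sigma>. n * g \<sigma>) (\<lambda>\<sigma>. 0) \<longrightarrow> n = 0)"

definition cochain_pullback :: "nat \<Rightarrow> ('b \<Rightarrow> 'a) \<Rightarrow> 'a cochain \<Rightarrow> 'b cochain" where
  "cochain_pullback p f \<phi> \<sigma> = \<phi> (simplex_map p f \<sigma>)"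

text \<open>The k-th edge [e_(k-1), e_k] of a singular simplex.\<close>
definition simplex_edge :: "nat \<Rightarrow> ((nat \<Rightarrow> real) \<Rightarrow> 'a) \<Rightarrow> (nat \<Rightarrow> real) \<Rightarrow> 'a" where
  "simplex_edge k \<sigma> =
     restrict (\<sigma> \<circ> (\<lambda>t i. if i = k - 1 then t 0 else if i = k then t 1 else 0)) (standard_simplex 1)"

text \<open>Alexander--Whitney cup product of q one-cochains: an q-cochain.\<close>
definition cup1 :: "nat \<Rightarrow> (nat \<Rightarrow> 'a cochain) \<Rightarrow> 'a cochain" where
  "cup1 q \<phi>s \<sigma> = (\<Prod>k\<in>{1..q}. \<phi>s k (simplex_edge k \<sigma>))"

definition kron :: "'a cochain \<Rightarrow> 'a chain \<Rightarrow> int" where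
  "kron \<phi> c = (\<Sum>s\<in>Poly_Mapping.keys c. poly_mapping.lookup c s * \<phi> s)"

definition Psi :: "nat \<Rightarrow> (nat \<Rightarrow> nat \<Rightarrow> 'a) \<Rightarrow> nat \<Rightarrow> 'a" where
  "Psi l y = (\<lambda>i\<in>{1..2*l}. y ((i + 1) div 2) (if odd i then 1 else 2))"

definition Phi :: "nat \<Rightarrow> (nat \<Rightarrow> 'a) \<Rightarrow> nat \<Rightarrow> 'a" where
  "Phi i x = (\<lambda>k\<in>{1..2}. x (2 * i - 2 + k))"

definition gperm :: "nat \<Rightarrow> (nat \<Rightarrow> nat) \<Rightarrow> (nat \<Rightarrow> 'a) \<Rightarrow> nat \<Rightarrow> 'a" where
  "gperm l \<sigma> x = (\<lambda>k\<in>{1..2*l}. x (2 * \<sigma> ((k + 1) div 2) - (if odd k then 1 else 0)))"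

end

theory Submission
  imports Defs
begin

text \<open>Composing \<Phi>_i with g_\<sigma> \<circ> \<Psi> gives the projection of the torus \<Prod>_j C^2 Y_j onto its
  factor \<sigma>(i), so by naturality the pairing equals the pairing of t with the cup product of
  the pullbacks of the restrictions \<alpha>_(r_i)|C^2 Y_\<sigma>(i) along these projections. At the cochain
  level (Alexander--Whitney products of 1-cochains) a coboundary sandwiched between two cocycles
  is itself a coboundary, so the pairing with a cycle depends only on the cohomology classes of
  the factors. Replacing each restriction by \<delta>_(r_i,\<sigma>(i)) g_\<sigma>(i) gives 0 as soon as
  r_i \<noteq> \<sigma>(i) for some i; otherwise the factors are the pulled back generators in the order \<sigma>,
  and graded commutativity of 1-classes yields sign \<sigma> times the normalised pairing 1.\<close>

section \<open>Subsimplices of singular simplices\<close>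

text \<open>In barycentric coordinates, vertex_map q w is the affine map from the standard
  q-simplex sending its j-th vertex to the (w j)-th vertex; subsimplex s q w is thus the
  q-simplex of s spanned by the vertices w 0, ..., w q of s.\<close>
definition vertex_map :: "nat \<Rightarrow> (nat \<Rightarrow> nat) \<Rightarrow> (nat \<Rightarrow> real) \<Rightarrow> nat \<Rightarrow> real" where
  "vertex_map q w t = (\<lambda>i. \<Sum>j\<le>q. if w j = i then t j else 0)"

definition subsimplex :: "((nat \<Rightarrow> real) \<Rightarrow> 'a) \<Rightarrow> nat \<Rightarrow> (nat \<Rightarrow> nat) \<Rightarrow> (nat \<Rightarrow> real) \<Rightarrow> 'a" where
  "subsimplex s q w = restrict (s \<circ> vertex_map q w) (standard_simplex q)"

definition coface :: "nat \<Rightarrow> nat \<Rightarrow> nat" where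
  "coface k j = (if j < k then j else Suc j)"

lemma vertex_map_in_standard_simplex:
  assumes t: "t \<in> standard_simplex q" and w: "\<And>j. j \<le> q \<Longrightarrow> w j \<le> p"
  shows "vertex_map q w t \<in> standard_simplex p"
proof -
  have t0: "\<And>i. 0 \<le> t i" and ts: "(\<Sum>i\<le>q. t i) = 1"
    using t by (auto simp: standard_simplex_def)
  have nonneg: "0 \<le> vertex_map q w t i" for i
    unfolding vertex_map_def by (auto intro!: sum_nonneg simp: t0)
  have le: "vertex_map q w t i \<le> (\<Sum>j\<le>q. t j)" for i
    unfolding vertex_map_def by (rule sum_mono) (auto simp: t0)
  have zero: "vertex_map q w t i = 0" if "i > p" for i
    unfolding vertex_map_def using w that by (intro sum.neutral) force
  have "(\<Sum>i\<le>p. vertex_map q w t i) = (\<Sum>j\<le>q. \<Sum>i\<le>p. if w j = i then t j else 0)"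
    unfolding vertex_map_def by (rule sum.swap)
  also have "\<dots> = (\<Sum>j\<le>q. t j)"
    by (rule sum.cong) (auto simp: w)
  finally show ?thesis
    using nonneg le zero ts by (auto simp: standard_simplex_def)
qed

lemma vertex_map_compose:
  assumes w': "\<And>j. j \<le> r \<Longrightarrow> w' j \<le> q"
  shows "vertex_map q w (vertex_map r w' t) = vertex_map r (w \<circ> w') t"
proof
  fix i
  have "vertex_map q w (vertex_map r w' t) i
      = (\<Sum>j\<le>q. \<Sum>m\<le>r. if w j = i \<and> w' m = j then t m else 0)"
    unfolding vertex_map_def by (rule sum.cong) (auto intro: sum.neutral)
  also have "\<dots> = (\<Sum>m\<le>r. \<Sum>j\<le>q. if w' m = j then (if w j = i then t m else 0) else 0)"
    by (subst sum.swap) (intro sum.cong; auto)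
  also have "\<dots> = vertex_map r (w \<circ> w') t i"
    unfolding vertex_map_def using w' by (intro sum.cong) (simp_all add: sum.delta)
  finally show "vertex_map q w (vertex_map r w' t) i = vertex_map r (w \<circ> w') t i" .
qed

lemma subsimplex_cong:
  "(\<And>j. j \<le> q \<Longrightarrow> w j = w' j) \<Longrightarrow> subsimplex s q w = subsimplex s q w'"
  unfolding subsimplex_def vertex_map_def by (intro ext) (simp add: restrict_def)

lemma subsimplex_subsimplex:
  assumes "\<And>j. j \<le> r \<Longrightarrow> w' j \<le> q"
  shows "subsimplex (subsimplex s q w) r w' = subsimplex s r (w \<circ> w')"
  unfolding subsimplex_def
  using vertex_map_in_standard_simplex[OF _ assms] vertex_map_compose[OF assms]
  by (intro ext) (simp add: restrict_def)

lemma subsimplex_id: "subsimplex s q id = restrict s (standard_simplex q)"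
proof -
  have "vertex_map q id t = t" if "t \<in> standard_simplex q" for t
  proof
    fix i
    show "vertex_map q id t i = t i"
      using that by (cases "i \<le> q") (auto simp: vertex_map_def standard_simplex_def)
  qed
  then show ?thesis
    by (intro ext) (simp add: subsimplex_def restrict_def)
qed

lemma singular_face_eq_subsimplex: "singular_face p k s = subsimplex s (p - 1) (coface k)"
proof -
  have "simplical_face k t = vertex_map (p - 1) (coface k) t"
    if "t \<in> standard_simplex (p - 1)" for t
  proof
    fix i
    have tz: "\<And>i. i > p - 1 \<Longrightarrow> t i = 0"
      using that by (auto simp: standard_simplex_def)
    consider "i < k" | "i = k" | "i > k" by linarith
    then show "simplical_face k t i = vertex_map (p - 1) (coface k) t i"
    proof cases
      case 1
      then have "vertex_map (p - 1) (coface k) t i = (\<Sum>j\<le>p - 1. if i = j then t j else 0)"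
        unfolding vertex_map_def by (intro sum.cong) (auto simp: coface_def)
      with 1 tz[of i] show ?thesis by (auto simp: simplical_face_def)
    next
      case 2
      then have "vertex_map (p - 1) (coface k) t i = 0"
        unfolding vertex_map_def by (intro sum.neutral) (auto simp: coface_def)
      with 2 show ?thesis by (simp add: simplical_face_def)
    next
      case 3
      then have "vertex_map (p - 1) (coface k) t i = (\<Sum>j\<le>p - 1. if i - 1 = j then t j else 0)"
        unfolding vertex_map_def by (intro sum.cong) (auto simp: coface_def)
      with 3 tz[of "i - 1"] show ?thesis by (auto simp: simplical_face_def)
    qed
  qed
  then show ?thesis
    unfolding singular_face_def subsimplex_def by (intro ext) (simp add: restrict_def)
qed

text \<open>On the standard simplex, vertex_map q w is the oriented simplex with vertices w j,
  hence continuous.\<close>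
lemma singular_simplex_subsimplex:
  assumes s: "singular_simplex p X s" and w: "\<And>j. j \<le> q \<Longrightarrow> w j \<le> p"
  shows "singular_simplex q X (subsimplex s q w)"
proof -
  define vs where "vs = (\<lambda>j i. if w j = i then 1 else (0::real))"
  have vertex_map_eq: "oriented_simplex q vs x = vertex_map q w x" if "x \<in> standard_simplex q" for x
    using that unfolding oriented_simplex_def vertex_map_def vs_def by (auto intro!: sum.cong)
  have "simplicial_simplex q (standard_simplex p) (oriented_simplex q vs)"
    unfolding simplicial_simplex
    using vertex_map_in_standard_simplex[OF _ w] vertex_map_eq by auto
  then have "continuous_map (subtopology (powertop_real UNIV) (standard_simplex q))
      (subtopology (powertop_real UNIV) (standard_simplex p)) (oriented_simplex q vs)"
    by (simp add: simplicial_simplex_def singular_simplex_def)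
  moreover have "continuous_map (subtopology (powertop_real UNIV) (standard_simplex p)) X s"
    using s by (simp add: singular_simplex_def)
  ultimately have "continuous_map (subtopology (powertop_real UNIV) (standard_simplex q)) X
      (subsimplex s q w)"
    by (rule continuous_map_eq[OF continuous_map_compose]) (simp add: subsimplex_def vertex_map_eq)
  then show ?thesis
    by (simp add: singular_simplex_def subsimplex_def)
qed

lemma simplex_map_subsimplex:
  assumes "\<And>j. j \<le> q \<Longrightarrow> w j \<le> p"
  shows "simplex_map q f (subsimplex s q w) = subsimplex (simplex_map p f s) q w"
  unfolding simplex_map_def subsimplex_def
  using vertex_map_in_standard_simplex[OF _ assms] by (intro ext) (simp add: restrict_def)

lemma simplex_edge_eq_subsimplex:
  assumes "1 \<le> k"
  shows "simplex_edge k s = subsimplex s 1 (\<lambda>j. k - 1 + j)"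
proof -
  have "(\<lambda>i. if i = k - 1 then t 0 else if i = k then t 1 else 0) = vertex_map 1 (\<lambda>j. k - 1 + j) t"
    for t :: "nat \<Rightarrow> real"
    using assms by (auto simp: vertex_map_def fun_eq_iff)
  then show ?thesis
    unfolding simplex_edge_def subsimplex_def by (simp add: comp_def)
qed

section \<open>Alexander--Whitney cup products\<close>

definition cup :: "nat \<Rightarrow> nat \<Rightarrow> 'a cochain \<Rightarrow> 'a cochain \<Rightarrow> 'a cochain" where
  "cup q r c d s = c (subsimplex s q id) * d (subsimplex s r (\<lambda>j. q + j))"

lemma coboundary_cup_expand:
  "coboundary (Suc (q + r)) (cup q r c d) s =
     (\<Sum>k\<le>q. (-1)^k * c (subsimplex s q (coface k))) * d (subsimplex s r (\<lambda>j. Suc (q + j)))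
     - (-1)^q * c (subsimplex s q id)
         * (\<Sum>i\<le>r. (-1)^i * d (subsimplex s r ((\<lambda>j. q + j) \<circ> coface (Suc i))))"
proof -
  define T where "T k = (-1)^k * (c (subsimplex s q (coface k))
      * d (subsimplex s r (coface k \<circ> (\<lambda>j. q + j))))" for k
  have "coboundary (Suc (q + r)) (cup q r c d) s = (\<Sum>k\<le>Suc (q + r). T k)"
    unfolding coboundary_def cup_def T_def singular_face_eq_subsimplex
    by (intro sum.cong refl) (simp add: subsimplex_subsimplex coface_def)
  also have "\<dots> = (\<Sum>k\<le>q. T k) + (\<Sum>i\<le>r. T (Suc (q + i)))"
    by (induction r) (auto simp: add.assoc)
  moreover have "T k = (-1)^k * c (subsimplex s q (coface k)) * d (subsimplex s r (\<lambda>j. Suc (q + j)))"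
    if "k \<le> q" for k
  proof -
    have "subsimplex s r (coface k \<circ> (\<lambda>j. q + j)) = subsimplex s r (\<lambda>j. Suc (q + j))"
      using that by (intro subsimplex_cong) (auto simp: coface_def)
    then show ?thesis by (simp add: T_def)
  qed
  moreover have "T (Suc (q + i)) = - ((-1)^q * c (subsimplex s q id)
      * ((-1)^i * d (subsimplex s r ((\<lambda>j. q + j) \<circ> coface (Suc i)))))" for i
  proof -
    have "subsimplex s q (coface (Suc (q + i))) = subsimplex s q id"
      "subsimplex s r (coface (Suc (q + i)) \<circ> (\<lambda>j. q + j))
        = subsimplex s r ((\<lambda>j. q + j) \<circ> coface (Suc i))"
      by (auto intro!: subsimplex_cong simp: coface_def)
    then show ?thesis by (simp add: T_def power_add)
  qed
  ultimately show ?thesis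
    by (simp add: sum_distrib_left sum_distrib_right sum_negf)
qed

lemma cup_coboundary_left:
  "cup (Suc q) r (coboundary (Suc q) c) d s =
     (\<Sum>k\<le>q. (-1)^k * c (subsimplex s q (coface k))) * d (subsimplex s r (\<lambda>j. Suc (q + j)))
     - (-1)^q * c (subsimplex s q id) * d (subsimplex s r (\<lambda>j. Suc (q + j)))"
proof -
  have "(+) (Suc q) = (\<lambda>j. Suc (q + j))" and "subsimplex s q (coface (Suc q)) = subsimplex s q id"
    by (auto intro!: subsimplex_cong simp: coface_def)
  then show ?thesis
    unfolding cup_def coboundary_def singular_face_eq_subsimplex
    by (simp add: subsimplex_subsimplex coface_def left_diff_distrib)
qed

lemma cup_coboundary_right:
  "cup q (Suc r) c (coboundary (Suc r) d) s =
     c (subsimplex s q id) * d (subsimplex s r (\<lambda>j. Suc (q + j)))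
     - c (subsimplex s q id)
         * (\<Sum>i\<le>r. (-1)^i * d (subsimplex s r ((\<lambda>j. q + j) \<circ> coface (Suc i))))"
proof -
  have "subsimplex s r ((\<lambda>j. q + j) \<circ> coface 0) = subsimplex s r (\<lambda>j. Suc (q + j))"
    by (intro subsimplex_cong) (auto simp: coface_def)
  then show ?thesis
    unfolding cup_def coboundary_def singular_face_eq_subsimplex sum.atMost_Suc_shift
    by (simp add: subsimplex_subsimplex coface_def right_diff_distrib sum_negf)
qed

lemma coboundary_cup:
  "coboundary (Suc (q + r)) (cup q r c d) s =
     cup (Suc q) r (coboundary (Suc q) c) d s + (-1)^q * cup q (Suc r) c (coboundary (Suc r) d) s"
  unfolding coboundary_cup_expand cup_coboundary_left cup_coboundary_right
  by (simp add: algebra_simps)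

lemma cocycle_cup:
  assumes c: "cocycle q X c" and d: "cocycle r X d"
  shows "cocycle (q + r) X (cup q r c d)"
  unfolding cocycle_def
proof (intro allI impI)
  fix s assume s: "singular_simplex (Suc (q + r)) X s"
  have "coboundary (Suc q) c (subsimplex s (Suc q) id) = 0"
    using c singular_simplex_subsimplex[OF s] by (simp add: cocycle_def)
  moreover have "coboundary (Suc r) d (subsimplex s (Suc r) (\<lambda>j. q + j)) = 0"
    using d singular_simplex_subsimplex[OF s] by (simp add: cocycle_def)
  ultimately show "coboundary (Suc (q + r)) (cup q r c d) s = 0"
    by (simp add: coboundary_cup cup_def)
qed

lemma cup1_eq_prod: "cup1 n f s = (\<Prod>k\<in>{1..n}. f k (subsimplex s 1 (\<lambda>j. k - 1 + j)))"
  unfolding cup1_def by (intro prod.cong refl) (simp add: simplex_edge_eq_subsimplex)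

lemma cup1_cong: "(\<And>k. k \<in> {1..n} \<Longrightarrow> f k = g k) \<Longrightarrow> cup1 n f = cup1 n g"
  unfolding cup1_def by (intro ext prod.cong) auto

lemma cup1_add: "cup1 (q + r) f = cup q r (cup1 q f) (cup1 r (\<lambda>k. f (q + k)))"
proof
  fix s
  have "cup1 q f (subsimplex s q id) = (\<Prod>k\<in>{1..q}. f k (subsimplex s 1 (\<lambda>j. k - 1 + j)))"
    unfolding cup1_eq_prod
    by (intro prod.cong refl)
      (auto simp: subsimplex_subsimplex intro!: arg_cong[where f = "f _"] subsimplex_cong)
  moreover have "cup1 r (\<lambda>k. f (q + k)) (subsimplex s r (\<lambda>j. q + j))
      = (\<Prod>k\<in>{1..r}. f (q + k) (subsimplex s 1 (\<lambda>j. q + k - 1 + j)))"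
    unfolding cup1_eq_prod
    by (intro prod.cong refl)
      (auto simp: subsimplex_subsimplex intro!: arg_cong[where f = "f _"] subsimplex_cong)
  moreover have "(\<Prod>k\<in>{1..q + r}. g k) = (\<Prod>k\<in>{1..q}. g k) * (\<Prod>k\<in>{1..r}. g (q + k))"
    for g :: "nat \<Rightarrow> int"
    using prod.ub_add_nat[of 1 q g r] prod.shift_bounds_cl_nat_ivl[of g 1 q r]
    by (simp add: add.commute)
  ultimately show "cup1 (q + r) f s = cup q r (cup1 q f) (cup1 r (\<lambda>k. f (q + k))) s"
    by (simp add: cup_def cup1_eq_prod)
qed

lemma cup1_one: "cup1 1 f s = f 1 (restrict s (standard_simplex 1))"
  using subsimplex_id[of s 1] by (simp add: cup1_eq_prod id_def)

lemma cocycle_cup1: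
  "(\<And>k. k \<in> {1..n} \<Longrightarrow> cocycle 1 X (f k)) \<Longrightarrow> cocycle n X (cup1 n f)"
proof (induction n)
  case 0
  show ?case by (simp add: cocycle_def coboundary_def cup1_def)
next
  case (Suc n)
  have "cocycle 1 X (cup1 1 (\<lambda>k. f (n + k)))"
  proof -
    have "coboundary 2 (cup1 1 (\<lambda>k. f (n + k))) s = coboundary 2 (f (Suc n)) s" for s
      unfolding coboundary_def cup1_one by (simp add: singular_face_def numeral_2_eq_2)
    then show ?thesis
      using Suc.prems[of "Suc n"] by (simp add: cocycle_def numeral_2_eq_2)
  qed
  with Suc show ?case
    using cocycle_cup[of n X "cup1 n f" 1] cup1_add[of n 1 f] by simp
qed

section \<open>The Kronecker pairing\<close>

lemma kron_superset:
  assumes "finite S" "Poly_Mapping.keys c \<subseteq> S"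
  shows "kron \<phi> c = (\<Sum>s\<in>S. poly_mapping.lookup c s * \<phi> s)"
  unfolding kron_def using assms
  by (intro sum.mono_neutral_left) (auto simp: in_keys_iff)

lemma kron_0 [simp]: "kron \<phi> 0 = 0"
  by (simp add: kron_def)

lemma kron_frag_of [simp]: "kron \<phi> (frag_of s) = \<phi> s"
  by (simp add: kron_def keys_frag_of)

lemma kron_add: "kron \<phi> (a + b) = kron \<phi> a + kron \<phi> b"
  using kron_superset[of "Poly_Mapping.keys a \<union> Poly_Mapping.keys b"] keys_add[of a b]
  by (simp add: lookup_add distrib_right sum.distrib)

lemma kron_diff: "kron \<phi> (a - b) = kron \<phi> a - kron \<phi> b"
  using kron_superset[of "Poly_Mapping.keys a \<union> Poly_Mapping.keys b"] keys_diff[of a b]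
  by (simp add: lookup_minus left_diff_distrib sum_subtractf)

lemma kron_frag_cmul: "kron \<phi> (frag_cmul a c) = a * kron \<phi> c"
  using kron_superset[OF finite_keys keys_cmul, of \<phi> a c]
  by (simp add: kron_def sum_distrib_left mult.assoc)

lemma kron_sum: "finite I \<Longrightarrow> kron \<phi> (sum f I) = (\<Sum>i\<in>I. kron \<phi> (f i))"
  by (induction I rule: finite_induct) (auto simp: kron_add)

lemma kron_cong: "(\<And>s. s \<in> Poly_Mapping.keys c \<Longrightarrow> \<phi> s = \<psi> s) \<Longrightarrow> kron \<phi> c = kron \<psi> c"
  unfolding kron_def by (rule sum.cong) auto

lemma kron_cochain_diff: "kron (\<lambda>s. \<phi> s - \<psi> s) c = kron \<phi> c - kron \<psi> c"
  unfolding kron_def by (simp add: right_diff_distrib sum_subtractf)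

lemma kron_cochain_cmul: "kron (\<lambda>s. a * \<phi> s) c = a * kron \<phi> c"
  unfolding kron_def by (simp add: sum_distrib_left mult.left_commute)

lemma kron_chain_boundary:
  assumes "1 \<le> p"
  shows "kron \<phi> (chain_boundary p c) = kron (coboundary p \<phi>) c"
proof -
  have "Poly_Mapping.keys c \<subseteq> Poly_Mapping.keys c" ..
  then show ?thesis
  proof (induction c rule: frag_induction)
    case (one s)
    with assms show ?case
      by (simp add: chain_boundary_of kron_sum kron_frag_cmul coboundary_def)
  qed (auto simp: chain_boundary_diff kron_diff)
qed

lemma kron_coboundary_cycle:
  assumes "singular_relcycle p X {} c" "1 \<le> p"
  shows "kron (coboundary p \<phi>) c = 0"
  using assms kron_chain_boundary[of p \<phi> c] by (simp add: singular_cycle)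

lemma singular_simplex_of_cycle:
  "singular_relcycle p X {} c \<Longrightarrow> s \<in> Poly_Mapping.keys c \<Longrightarrow> singular_simplex p X s"
  by (auto simp: singular_cycle singular_chain_def)

lemma cup_cup_apply:
  "cup (Suc (q + p)) r (cup q (Suc p) F D) H s =
     F (subsimplex s q id) * D (subsimplex s (Suc p) (\<lambda>j. q + j))
       * H (subsimplex s r (\<lambda>j. Suc (q + p + j)))"
  by (simp add: cup_def subsimplex_subsimplex comp_def id_def)

lemma coboundary_cup_cup:
  assumes F: "cocycle q X F" and H: "cocycle r X H"
    and s: "singular_simplex (Suc (q + p + r)) X s"
  shows "coboundary (Suc (q + p + r)) (cup (q + p) r (cup q p F c) H) s =
           (-1)^q * cup (Suc (q + p)) r (cup q (Suc p) F (coboundary (Suc p) c)) H s"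
proof -
  have "coboundary (Suc r) H (subsimplex s (Suc r) (\<lambda>j. q + p + j)) = 0"
    using H singular_simplex_subsimplex[OF s] by (simp add: cocycle_def)
  moreover have "coboundary (Suc q) F (subsimplex (subsimplex s (Suc (q + p)) id) (Suc q) id) = 0"
    using F singular_simplex_subsimplex[OF singular_simplex_subsimplex[OF s]]
    by (simp add: cocycle_def)
  ultimately show ?thesis
    by (simp add: coboundary_cup cup_def)
qed

lemma kron_cup_coboundary_between_cocycles:
  assumes F: "cocycle q X F" and H: "cocycle r X H"
    and t: "singular_relcycle (Suc (q + p + r)) X {} t"
  shows "kron (cup (Suc (q + p)) r (cup q (Suc p) F (coboundary (Suc p) c)) H) t = 0"
proof -
  let ?M = "cup (q + p) r (cup q p F c) H"
  have "kron (cup (Suc (q + p)) r (cup q (Suc p) F (coboundary (Suc p) c)) H) t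
      = kron (\<lambda>s. (-1)^q * coboundary (Suc (q + p + r)) ?M s) t"
    by (intro kron_cong)
      (simp add: coboundary_cup_cup[OF F H singular_simplex_of_cycle[OF t]] flip: power_add)
  also have "\<dots> = 0"
    by (simp add: kron_cochain_cmul kron_coboundary_cycle[OF t])
  finally show ?thesis .
qed

lemma cup1_split3:
  "cup1 (Suc (q + p + r)) f s =
     cup1 q f (subsimplex s q id)
       * cup1 (Suc p) (\<lambda>k. f (q + k)) (subsimplex s (Suc p) (\<lambda>j. q + j))
       * cup1 r (\<lambda>k. f (Suc (q + p + k))) (subsimplex s r (\<lambda>j. Suc (q + p + j)))"
proof -
  have "cup1 (Suc (q + p + r)) f = cup (Suc (q + p)) r (cup1 (q + Suc p) f)
      (cup1 r (\<lambda>k. f (Suc (q + p + k))))"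
    using cup1_add[of "Suc (q + p)" r f] by simp
  then show ?thesis
    unfolding cup1_add cup_cup_apply by simp
qed

section \<open>Invariance under cohomologous factors and permutations\<close>

lemma kron_cup1_block_cohomologous:
  assumes l: "l = Suc (q + p + r)"
    and cf: "\<And>k. k \<in> {1..l} \<Longrightarrow> k \<notin> {Suc q..Suc (q + p)} \<Longrightarrow> cocycle 1 X (f k)"
    and ff': "\<And>k. k \<notin> {Suc q..Suc (q + p)} \<Longrightarrow> f' k = f k"
    and block: "cohomologous (Suc p) X (cup1 (Suc p) (\<lambda>k. f (q + k))) (cup1 (Suc p) (\<lambda>k. f' (q + k)))"
    and t: "singular_relcycle l X {} t"
  shows "kron (cup1 l f) t = kron (cup1 l f') t"
proof -
  obtain c where c: "\<And>\<tau>. singular_simplex (Suc p) X \<tau> \<Longrightarrow>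
      cup1 (Suc p) (\<lambda>k. f (q + k)) \<tau> - cup1 (Suc p) (\<lambda>k. f' (q + k)) \<tau> = coboundary (Suc p) c \<tau>"
    using block by (auto simp: cohomologous_def)
  define F where "F = cup1 q f"
  define H where "H = cup1 r (\<lambda>k. f (Suc (q + p + k)))"
  have F: "cocycle q X F"
    unfolding F_def by (rule cocycle_cup1) (use cf in \<open>auto simp: l\<close>)
  have H: "cocycle r X H"
    unfolding H_def by (rule cocycle_cup1) (use cf in \<open>auto simp: l\<close>)
  have F': "cup1 q f' = F" and H': "cup1 r (\<lambda>k. f' (Suc (q + p + k))) = H"
    unfolding F_def H_def using ff' by (auto intro!: cup1_cong)
  have diff: "cup1 l f s - cup1 l f' s = cup (Suc (q + p)) r (cup q (Suc p) F (coboundary (Suc p) c)) H s"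
    if s: "s \<in> Poly_Mapping.keys t" for s
  proof -
    let ?front = "subsimplex s q id" and ?mid = "subsimplex s (Suc p) (\<lambda>j. q + j)"
      and ?back = "subsimplex s r (\<lambda>j. Suc (q + p + j))"
    have mid: "singular_simplex (Suc p) X ?mid"
      using singular_simplex_subsimplex[OF singular_simplex_of_cycle[OF t s]] by (simp add: l)
    have split: "cup1 l f s = F ?front * cup1 (Suc p) (\<lambda>k. f (q + k)) ?mid * H ?back"
      unfolding l F_def H_def by (rule cup1_split3)
    have split': "cup1 l f' s = F ?front * cup1 (Suc p) (\<lambda>k. f' (q + k)) ?mid * H ?back"
      unfolding l F'[symmetric] H'[symmetric] by (rule cup1_split3)
    have "cup1 l f s - cup1 l f' s = F ?front
        * (cup1 (Suc p) (\<lambda>k. f (q + k)) ?mid - cup1 (Suc p) (\<lambda>k. f' (q + k)) ?mid) * H ?back"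
      unfolding split split' by (simp only: left_diff_distrib right_diff_distrib)
    also have "\<dots> = F ?front * coboundary (Suc p) c ?mid * H ?back"
      by (simp only: c[OF mid])
    finally show ?thesis
      by (simp only: cup_cup_apply)
  qed
  have "kron (cup1 l f) t - kron (cup1 l f') t = kron (\<lambda>s. cup1 l f s - cup1 l f' s) t"
    by (rule kron_cochain_diff[symmetric])
  also have "\<dots> = kron (cup (Suc (q + p)) r (cup q (Suc p) F (coboundary (Suc p) c)) H) t"
    by (rule kron_cong) (rule diff)
  also have "\<dots> = 0"
    by (rule kron_cup_coboundary_between_cocycles[OF F H]) (use t in \<open>simp add: l\<close>)
  finally show ?thesis by simp
qed

lemma kron_cup1_cohomologous_factor:
  assumes i: "i \<in> {1..l}"
    and cA: "\<And>k. k \<in> {1..l} \<Longrightarrow> k \<noteq> i \<Longrightarrow> cocycle 1 X (A k)"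
    and AB: "\<And>k. k \<noteq> i \<Longrightarrow> B k = A k"
    and hom: "cohomologous 1 X (A i) (B i)"
    and t: "singular_relcycle l X {} t"
  shows "kron (cup1 l A) t = kron (cup1 l B) t"
proof (rule kron_cup1_block_cohomologous[where q = "i - 1" and p = 0 and r = "l - i", OF _ _ _ _ t])
  have "cup1 (Suc 0) (\<lambda>k. g (i - 1 + k)) \<tau> = g i \<tau>" if "singular_simplex 1 X \<tau>" for g :: "nat \<Rightarrow> 'a cochain" and \<tau>
    using i that cup1_one[of "\<lambda>k. g (i - 1 + k)" \<tau>]
    by (simp add: singular_simplex_def extensional_restrict)
  then show "cohomologous (Suc 0) X (cup1 (Suc 0) (\<lambda>k. A (i - 1 + k))) (cup1 (Suc 0) (\<lambda>k. B (i - 1 + k)))"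
    using hom by (simp add: cohomologous_def)
qed (use i cA AB in auto)

lemma kron_cup1_cohomologous:
  assumes cA: "\<And>k. k \<in> {1..l} \<Longrightarrow> cocycle 1 X (A k)"
    and cB: "\<And>k. k \<in> {1..l} \<Longrightarrow> cocycle 1 X (B k)"
    and hom: "\<And>k. k \<in> {1..l} \<Longrightarrow> cohomologous 1 X (A k) (B k)"
    and t: "singular_relcycle l X {} t"
  shows "kron (cup1 l A) t = kron (cup1 l B) t"
proof -
  define C where "C n k = (if k \<le> n then B k else A k)" for n k
  have "kron (cup1 l A) t = kron (cup1 l (C n)) t" if "n \<le> l" for n
    using that
  proof (induction n)
    case 0
    have "cup1 l (C 0) = cup1 l A" by (rule cup1_cong) (auto simp: C_def)
    then show ?case by simp
  next
    case (Suc n)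
    have "kron (cup1 l (C n)) t = kron (cup1 l (C (Suc n))) t"
      by (rule kron_cup1_cohomologous_factor[of "Suc n"])
        (use Suc.prems cA cB hom t in \<open>auto simp: C_def\<close>)
    with Suc show ?case by simp
  qed
  moreover have "cup1 l (C l) = cup1 l B" by (rule cup1_cong) (auto simp: C_def)
  ultimately show ?thesis by (metis order.refl)
qed

text \<open>The product of the values of a and b is an explicit homotopy, because 1-cocycles
  are additive along the boundary of a 2-simplex.\<close>
lemma cup_one_one_anticommute:
  assumes a: "cocycle 1 X a" and b: "cocycle 1 X b" and \<tau>: "singular_simplex 2 X \<tau>"
  shows "cup 1 1 a b \<tau> + cup 1 1 b a \<tau> = - coboundary 2 (\<lambda>\<rho>. a \<rho> * b \<rho>) \<tau>"
proof -
  have face0: "singular_face 2 0 \<tau> = subsimplex \<tau> 1 (\<lambda>j. 1 + j)"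
    and face2: "singular_face 2 2 \<tau> = subsimplex \<tau> 1 id"
    by (simp_all add: singular_face_eq_subsimplex) (auto intro!: subsimplex_cong simp: coface_def)
  have additive: "g (singular_face 2 1 \<tau>) = g (singular_face 2 0 \<tau>) + g (singular_face 2 2 \<tau>)"
    if "cocycle 1 X g" for g
    using that \<tau> by (auto simp: cocycle_def coboundary_def numeral_2_eq_2)
  have "coboundary 2 (\<lambda>\<rho>. a \<rho> * b \<rho>) \<tau> =
      a (singular_face 2 0 \<tau>) * b (singular_face 2 0 \<tau>)
      - a (singular_face 2 1 \<tau>) * b (singular_face 2 1 \<tau>)
      + a (singular_face 2 2 \<tau>) * b (singular_face 2 2 \<tau>)"
    by (simp add: coboundary_def numeral_2_eq_2)
  then show ?thesis
    unfolding additive[OF a] additive[OF b] face0 face2 cup_def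
    by (simp add: algebra_simps)
qed

lemma cup1_two: "cup1 2 f = cup 1 1 (f 1) (f 2)"
  by (auto simp: cup1_eq_prod cup_def numeral_2_eq_2 intro!: ext arg_cong[where f = "f _"] subsimplex_cong)

lemma cup1_negate_factor:
  assumes "i \<in> {1..n}"
  shows "cup1 n (f(i := (\<lambda>\<tau>. - f i \<tau>))) s = - cup1 n f s"
proof -
  have "(\<Prod>k\<in>{1..n} - {i}. (f(i := (\<lambda>\<tau>. - f i \<tau>))) k (simplex_edge k s))
      = (\<Prod>k\<in>{1..n} - {i}. f k (simplex_edge k s))"
    by (intro prod.cong) auto
  then show ?thesis
    unfolding cup1_def using assms by (simp add: prod.remove)
qed

lemma kron_cup1_swap_adjacent:
  assumes i: "1 \<le> i" "Suc i \<le> l"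
    and cf: "\<And>k. k \<in> {1..l} \<Longrightarrow> cocycle 1 X (f k)"
    and t: "singular_relcycle l X {} t"
  shows "kron (cup1 l (f \<circ> Transposition.transpose i (Suc i))) t = - kron (cup1 l f) t"
proof -
  define f' where "f' = f(i := (\<lambda>\<tau>. - f i \<tau>))"
  \<comment> \<open>negating the i-th factor turns the swap into a cohomologous change of the block {i, i + 1}\<close>
  have "kron (cup1 l f') t = kron (cup1 l (f \<circ> Transposition.transpose i (Suc i))) t"
  proof (rule kron_cup1_block_cohomologous[where q = "i - 1" and p = 1 and r = "l - Suc i", OF _ _ _ _ t])
    have "cup1 2 (\<lambda>k. f' (i - 1 + k)) \<tau> - cup1 2 (\<lambda>k. (f \<circ> Transposition.transpose i (Suc i)) (i - 1 + k)) \<tau>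
        = coboundary 2 (\<lambda>\<rho>. f i \<rho> * f (Suc i) \<rho>) \<tau>"
      if "singular_simplex 2 X \<tau>" for \<tau>
      unfolding cup1_two using cup_one_one_anticommute[OF cf cf that, of i "Suc i"] i
      by (simp add: f'_def cup_def algebra_simps)
    then show "cohomologous (Suc 1) X (cup1 (Suc 1) (\<lambda>k. f' (i - 1 + k)))
        (cup1 (Suc 1) (\<lambda>k. (f \<circ> Transposition.transpose i (Suc i)) (i - 1 + k)))"
      unfolding cohomologous_def by (auto simp: numeral_2_eq_2)
  qed (use i cf in \<open>auto simp: f'_def\<close>)
  moreover have "cup1 l f' = (\<lambda>s. - cup1 l f s)"
    using i by (simp add: fun_eq_iff f'_def cup1_negate_factor)
  ultimately show ?thesis
    using kron_cochain_cmul[of "-1" "cup1 l f" t] by simp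
qed

lemma cocycles_permute:
  assumes "\<And>k. k \<in> {1..l} \<Longrightarrow> cocycle 1 X (f k)" and "p permutes {1..l}" and "k \<in> {1..l}"
  shows "cocycle 1 X ((f \<circ> p) k)"
  using assms permutes_in_image[OF assms(2)] by simp

text \<open>The transposition of a and b + 1 is the conjugate of the transposition of a and b
  by the adjacent transposition of b and b + 1.\<close>
lemma kron_cup1_transpose_Suc_add:
  assumes "1 \<le> a" "Suc (a + d) \<le> l"
    and "\<And>k. k \<in> {1..l} \<Longrightarrow> cocycle 1 X (f k)"
    and t: "singular_relcycle l X {} t"
  shows "kron (cup1 l (f \<circ> Transposition.transpose a (Suc (a + d)))) t = - kron (cup1 l f) t"
  using assms(1-3)
proof (induction d arbitrary: f)
  case 0
  then have "kron (cup1 l (f \<circ> Transposition.transpose a (Suc a))) t = - kron (cup1 l f) t"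
    by (intro kron_cup1_swap_adjacent[OF _ _ _ t]) auto
  then show ?case by (simp only: add_0_right)
next
  case (Suc d)
  define b where "b = Suc (a + d)"
  define s where "s = Transposition.transpose b (Suc b)"
  define g where "g = f \<circ> s \<circ> Transposition.transpose a b"
  have s: "s permutes {1..l}" and tr: "Transposition.transpose a b permutes {1..l}"
    using Suc.prems by (auto simp: s_def b_def intro!: permutes_swap_id)
  have cfs: "\<And>k. k \<in> {1..l} \<Longrightarrow> cocycle 1 X ((f \<circ> s) k)"
    by (rule cocycles_permute[OF Suc.prems(3) s])
  have cg: "\<And>k. k \<in> {1..l} \<Longrightarrow> cocycle 1 X (g k)"
    unfolding g_def by (rule cocycles_permute[OF cfs tr])
  have "Transposition.transpose a (Suc b) = s \<circ> Transposition.transpose a b \<circ> s"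
    by (auto simp: s_def b_def Transposition.transpose_def fun_eq_iff)
  then have "f \<circ> Transposition.transpose a (Suc (a + Suc d)) = g \<circ> s"
    by (simp add: g_def b_def comp_assoc)
  then have "kron (cup1 l (f \<circ> Transposition.transpose a (Suc (a + Suc d)))) t = kron (cup1 l (g \<circ> s)) t"
    by (simp only:)
  also have "\<dots> = - kron (cup1 l g) t"
    unfolding s_def by (rule kron_cup1_swap_adjacent[OF _ _ cg t]) (use Suc.prems in \<open>auto simp: b_def\<close>)
  also have "\<dots> = - (- kron (cup1 l (f \<circ> s)) t)"
    unfolding g_def b_def by (subst Suc.IH) (use Suc.prems cfs in auto)
  also have "\<dots> = - kron (cup1 l f) t"
    unfolding s_def by (subst kron_cup1_swap_adjacent[OF _ _ Suc.prems(3) t]) (use Suc.prems in \<open>auto simp: b_def\<close>)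
  finally show ?case .
qed

lemma kron_cup1_transpose:
  assumes ab: "a \<in> {1..l}" "b \<in> {1..l}" "a \<noteq> b"
    and cf: "\<And>k. k \<in> {1..l} \<Longrightarrow> cocycle 1 X (f k)"
    and t: "singular_relcycle l X {} t"
  shows "kron (cup1 l (f \<circ> Transposition.transpose a b)) t = - kron (cup1 l f) t"
proof (cases "a < b")
  case True
  then obtain d where "b = Suc (a + d)" by (metis less_imp_Suc_add)
  with kron_cup1_transpose_Suc_add[OF _ _ cf t, of a d] ab show ?thesis by simp
next
  case False
  then obtain d where "a = Suc (b + d)" using ab by (metis less_imp_Suc_add nat_neq_iff)
  with kron_cup1_transpose_Suc_add[OF _ _ cf t, of b d] ab show ?thesis by (simp add: transpose_commute)
qed

lemma kron_cup1_permute: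
  assumes p: "p permutes {1..l}"
    and cf: "\<And>k. k \<in> {1..l} \<Longrightarrow> cocycle 1 X (f k)"
    and t: "singular_relcycle l X {} t"
  shows "kron (cup1 l (f \<circ> p)) t = sign p * kron (cup1 l f) t"
  using p finite_atLeastAtMost cf
proof (induction p arbitrary: f rule: permutes_induct)
  case id
  then show ?case by simp
next
  case (swap a b p)
  have "kron (cup1 l (f \<circ> (Transposition.transpose a b \<circ> p))) t
      = kron (cup1 l ((f \<circ> Transposition.transpose a b) \<circ> p)) t"
    by (simp only: comp_assoc)
  also have "\<dots> = sign p * kron (cup1 l (f \<circ> Transposition.transpose a b)) t"
    using cocycles_permute[OF swap.prems permutes_swap_id[OF swap(1,2)]] by (rule swap.IH)
  also have "\<dots> = sign (Transposition.transpose a b \<circ> p) * kron (cup1 l f) t"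
  proof -
    have "kron (cup1 l (f \<circ> Transposition.transpose a b)) t = - kron (cup1 l f) t"
      by (rule kron_cup1_transpose[OF _ _ _ swap.prems t]) (use swap in auto)
    then show ?thesis
      using swap permutes_imp_permutation[OF finite_atLeastAtMost \<open>p permutes {1..l}\<close>]
      by (simp add: sign_compose permutation_swap_id sign_swap_id)
  qed
  finally show ?case .
qed

section \<open>Naturality\<close>

lemma coboundary_cochain_pullback:
  "coboundary (Suc n) (cochain_pullback n f \<phi>) \<tau> = coboundary (Suc n) \<phi> (simplex_map (Suc n) f \<tau>)"
proof -
  have "simplex_map n f (subsimplex \<tau> n (coface k)) = subsimplex (simplex_map (Suc n) f \<tau>) n (coface k)"
    for k by (rule simplex_map_subsimplex) (auto simp: coface_def)
  then show ?thesis
    by (simp add: coboundary_def cochain_pullback_def singular_face_eq_subsimplex)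
qed

lemma cocycle_cochain_pullback:
  assumes "continuous_map X Y f" "cocycle p Y \<phi>"
  shows "cocycle p X (cochain_pullback p f \<phi>)"
  using assms singular_simplex_simplex_map
  unfolding cocycle_def coboundary_cochain_pullback by blast

lemma cohomologous_cochain_pullback:
  assumes f: "continuous_map X Y f" and hom: "cohomologous (Suc n) Y \<phi> \<psi>"
  shows "cohomologous (Suc n) X (cochain_pullback (Suc n) f \<phi>) (cochain_pullback (Suc n) f \<psi>)"
proof -
  obtain \<beta> where \<beta>: "\<And>\<sigma>. singular_simplex (Suc n) Y \<sigma> \<Longrightarrow> \<phi> \<sigma> - \<psi> \<sigma> = coboundary (Suc n) \<beta> \<sigma>"
    using hom by (auto simp: cohomologous_def)
  show ?thesis
    unfolding cohomologous_def
  proof (intro exI allI impI)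
    fix \<tau> assume "singular_simplex (Suc n) X \<tau>"
    then have "singular_simplex (Suc n) Y (simplex_map (Suc n) f \<tau>)"
      using f singular_simplex_simplex_map by blast
    then show "cochain_pullback (Suc n) f \<phi> \<tau> - cochain_pullback (Suc n) f \<psi> \<tau>
        = coboundary (Suc n) (cochain_pullback n f \<beta>) \<tau>"
      using \<beta> by (simp add: cochain_pullback_def coboundary_cochain_pullback)
  qed
qed

lemma cochain_pullback_compose:
  "cochain_pullback p f (cochain_pullback p g \<phi>) = cochain_pullback p (g \<circ> f) \<phi>"
  by (simp add: cochain_pullback_def simplex_map_compose fun_eq_iff)

lemma cochain_pullback_cup1:
  "cochain_pullback l f (cup1 l \<phi>) = cup1 l (\<lambda>k. cochain_pullback 1 f (\<phi> k))"
  unfolding cochain_pullback_def cup1_eq_prod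
  by (intro ext prod.cong refl) (subst simplex_map_subsimplex, auto)

lemma kron_chain_map: "kron \<phi> (chain_map p f c) = kron (cochain_pullback p f \<phi>) c"
proof -
  have "Poly_Mapping.keys c \<subseteq> Poly_Mapping.keys c" ..
  then show ?thesis
    by (induction c rule: frag_induction)
      (auto simp: chain_map_diff kron_diff cochain_pullback_def)
qed

lemma kron_cup1_cong:
  assumes "\<And>k \<tau>. k \<in> {1..l} \<Longrightarrow> singular_simplex 1 X \<tau> \<Longrightarrow> A k \<tau> = B k \<tau>"
    and "singular_chain l X t"
  shows "kron (cup1 l A) t = kron (cup1 l B) t"
proof (intro kron_cong)
  fix s assume "s \<in> Poly_Mapping.keys t"
  then have s: "singular_simplex l X s"
    using assms(2) by (auto simp: singular_chain_def)
  show "cup1 l A s = cup1 l B s"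
    unfolding cup1_eq_prod
    by (intro prod.cong refl assms(1)) (auto intro!: singular_simplex_subsimplex[OF s])
qed

section \<open>Configuration spaces and the maps \<Psi>, \<Phi> and g_\<sigma>\<close>

lemma conf_subtopology:
  "conf k (subtopology X S) = subtopology (conf k X) (\<Pi>\<^sub>E i\<in>{1..k}. S)"
  unfolding conf_def subtopology_product_topology[symmetric]
  by (simp add: subtopology_subtopology Int_commute)

lemma Phi_gperm_Psi:
  assumes k: "k \<in> {1..l}" and \<sigma>k: "\<sigma> k \<in> {1..l}" and y: "y (\<sigma> k) \<in> extensional {1..2}"
  shows "Phi k (gperm l \<sigma> (Psi l y)) = y (\<sigma> k)"
proof
  fix n :: nat
  consider "n = 1" | "n = 2" | "n \<notin> {1..2}" by fastforce
  then show "Phi k (gperm l \<sigma> (Psi l y)) n = y (\<sigma> k) n"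
  proof cases
    case 1
    have "2 * k - 2 + n = 2 * k - 1" "2 * k - 1 \<in> {1..2 * l}" "odd (2 * k - 1)"
      "(2 * k - 1 + 1) div 2 = k" "2 * \<sigma> k - 1 \<in> {1..2 * l}" "odd (2 * \<sigma> k - 1)"
      "(2 * \<sigma> k - 1 + 1) div 2 = \<sigma> k"
      using k \<sigma>k 1 by auto
    with k \<sigma>k 1 show ?thesis by (simp add: Phi_def gperm_def Psi_def)
  next
    case 2
    have "2 * k - 2 + n = 2 * k" "2 * k \<in> {1..2 * l}" "(2 * k + 1) div 2 = k"
      "2 * \<sigma> k \<in> {1..2 * l}" "(2 * \<sigma> k + 1) div 2 = \<sigma> k"
      using k \<sigma>k 2 by auto
    with k \<sigma>k 2 show ?thesis by (simp add: Phi_def gperm_def Psi_def)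
  next
    case 3
    with y show ?thesis by (auto simp: Phi_def extensional_def)
  qed
qed

lemma continuous_map_conf_inclusion:
  assumes "S \<subseteq> R"
  shows "continuous_map (conf k (top_of_set S)) (conf k (top_of_set R)) id"
proof -
  have "top_of_set S = subtopology (top_of_set R) S"
    using assms by (simp add: subtopology_subtopology Int_absorb1)
  then show ?thesis
    by (simp add: conf_subtopology continuous_map_from_subtopology)
qed

lemma kron_cup1_gperm_Psi:
  assumes \<sigma>: "\<sigma> permutes {1..l}"
    and t: "singular_chain l (product_topology (\<lambda>j. conf 2 (Z j)) {1..l}) t"
  shows "kron (cup1 l (\<lambda>i. cochain_pullback 1 (Phi i) (\<phi> i)))
           (chain_map l (gperm l \<sigma>) (chain_map l (Psi l) t))
         = kron (cup1 l (\<lambda>i. cochain_pullback 1 (\<lambda>y. y (\<sigma> i)) (\<phi> i))) t"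
proof -
  have "chain_map l (gperm l \<sigma>) (chain_map l (Psi l) t) = chain_map l (gperm l \<sigma> \<circ> Psi l) t"
    by (simp only: chain_map_compose o_apply)
  then have "kron (cup1 l (\<lambda>i. cochain_pullback 1 (Phi i) (\<phi> i)))
               (chain_map l (gperm l \<sigma>) (chain_map l (Psi l) t))
      = kron (cup1 l (\<lambda>i. cochain_pullback 1 (Phi i \<circ> (gperm l \<sigma> \<circ> Psi l)) (\<phi> i))) t"
    by (simp add: kron_chain_map cochain_pullback_cup1 cochain_pullback_compose)
  also have "\<dots> = kron (cup1 l (\<lambda>i. cochain_pullback 1 (\<lambda>y. y (\<sigma> i)) (\<phi> i))) t"
  proof (rule kron_cup1_cong[OF _ t])
    fix k \<tau>
    assume k: "k \<in> {1..l}" and \<tau>: "singular_simplex 1 (product_topology (\<lambda>j. conf 2 (Z j)) {1..l}) \<tau>"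
    have \<sigma>k: "\<sigma> k \<in> {1..l}"
      using permutes_in_image[OF \<sigma>] k by simp
    have "(Phi k \<circ> (gperm l \<sigma> \<circ> Psi l)) y = y (\<sigma> k)"
      if "y \<in> topspace (product_topology (\<lambda>j. conf 2 (Z j)) {1..l})" for y
    proof -
      have "y (\<sigma> k) \<in> extensional {1..2}"
        using that \<sigma>k by (auto simp: conf_def PiE_def Pi_def)
      then show ?thesis
        using Phi_gperm_Psi[of k l \<sigma> y, OF k \<sigma>k] by simp
    qed
    then have "simplex_map 1 (Phi k \<circ> (gperm l \<sigma> \<circ> Psi l)) \<tau> = simplex_map 1 (\<lambda>y. y (\<sigma> k)) \<tau>"
      by (rule simplex_map_eq[OF \<tau>])
    then show "cochain_pullback 1 (Phi k \<circ> (gperm l \<sigma> \<circ> Psi l)) (\<phi> k) \<tau>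
        = cochain_pullback 1 (\<lambda>y. y (\<sigma> k)) (\<phi> k) \<tau>"
      by (simp add: cochain_pullback_def)
  qed
  finally show ?thesis .
qed

lemma kron_cup1_projections_cohomologous:
  assumes \<sigma>: "\<sigma> permutes {1..l}"
    and t: "singular_relcycle l (product_topology Z {1..l}) {} t"
    and ca: "\<And>i. i \<in> {1..l} \<Longrightarrow> cocycle 1 (Z (\<sigma> i)) (a i)"
    and cb: "\<And>i. i \<in> {1..l} \<Longrightarrow> cocycle 1 (Z (\<sigma> i)) (b i)"
    and hom: "\<And>i. i \<in> {1..l} \<Longrightarrow> cohomologous 1 (Z (\<sigma> i)) (a i) (b i)"
  shows "kron (cup1 l (\<lambda>i. cochain_pullback 1 (\<lambda>y. y (\<sigma> i)) (a i))) t
       = kron (cup1 l (\<lambda>i. cochain_pullback 1 (\<lambda>y. y (\<sigma> i)) (b i))) t"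
proof (rule kron_cup1_cohomologous[OF _ _ _ t])
  fix i assume i: "i \<in> {1..l}"
  then have proj: "continuous_map (product_topology Z {1..l}) (Z (\<sigma> i)) (\<lambda>y. y (\<sigma> i))"
    using permutes_in_image[OF \<sigma>] by (simp add: continuous_map_product_projection)
  show "cocycle 1 (product_topology Z {1..l}) (cochain_pullback 1 (\<lambda>y. y (\<sigma> i)) (a i))"
    by (rule cocycle_cochain_pullback[OF proj ca[OF i]])
  show "cocycle 1 (product_topology Z {1..l}) (cochain_pullback 1 (\<lambda>y. y (\<sigma> i)) (b i))"
    by (rule cocycle_cochain_pullback[OF proj cb[OF i]])
  show "cohomologous 1 (product_topology Z {1..l})
      (cochain_pullback 1 (\<lambda>y. y (\<sigma> i)) (a i)) (cochain_pullback 1 (\<lambda>y. y (\<sigma> i)) (b i))"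
    by (rule cohomologous_cochain_pullback[where n = 0, folded One_nat_def, OF proj hom[OF i]])
qed

lemma kron_cup1_projections_permute:
  assumes \<sigma>: "\<sigma> permutes {1..l}"
    and t: "singular_relcycle l (product_topology Z {1..l}) {} t"
    and cg: "\<And>j. j \<in> {1..l} \<Longrightarrow> cocycle 1 (Z j) (g j)"
  shows "kron (cup1 l (\<lambda>i. cochain_pullback 1 (\<lambda>y. y (\<sigma> i)) (g (\<sigma> i)))) t
       = sign \<sigma> * kron (cup1 l (\<lambda>j. cochain_pullback 1 (\<lambda>y. y j) (g j))) t"
proof -
  have "cocycle 1 (product_topology Z {1..l}) (cochain_pullback 1 (\<lambda>y. y j) (g j))"
    if "j \<in> {1..l}" for j
    using continuous_map_product_projection[OF that] cg[OF that] by (rule cocycle_cochain_pullback)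
  from kron_cup1_permute[OF \<sigma> this t] show ?thesis
    by (simp add: comp_def)
qed

lemma kron_cup1_zero_factor:
  assumes "j \<in> {1..l}" "f j = (\<lambda>_. 0)"
  shows "kron (cup1 l f) t = 0"
proof -
  have "cup1 l f = (\<lambda>_. 0)"
    using assms by (auto simp: cup1_def fun_eq_iff intro: prod_zero)
  then show ?thesis
    by (simp add: kron_def)
qed

theorem proposition5p5:
  fixes V :: "'v set" and E :: "'v set set" and pos :: "'v \<Rightarrow> 'e::euclidean_space"
    and m l :: nat and v :: "nat \<Rightarrow> 'v" and Y :: "nat \<Rightarrow> 'e set"
    and \<alpha> g :: "nat \<Rightarrow> (nat \<Rightarrow> 'e) cochain"
    and t :: "(nat \<Rightarrow> nat \<Rightarrow> 'e) chain"
    and \<sigma> r :: "nat \<Rightarrow> nat"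
  defines "T \<equiv> top_of_set (realisation E pos)"
  assumes tree: "geometric_tree V E pos"
    and ess: "bij_betw v {1..m} {w \<in> V. vdegree E w \<ge> 3}"
    and l: "1 \<le> l" "l \<le> m"
    and Ysub: "\<And>i. i \<in> {1..m} \<Longrightarrow> Y i \<subseteq> realisation E pos"
    and Yg: "\<And>i. i \<in> {1..m} \<Longrightarrow> Y_graph_at E pos (v i) (Y i)"
    and Ydisj: "\<And>i j. i \<in> {1..m} \<Longrightarrow> j \<in> {1..m} \<Longrightarrow> i \<noteq> j \<Longrightarrow> Y i \<inter> Y j = {}"
    and ggen: "\<And>j. j \<in> {1..m} \<Longrightarrow> generator_H1 (conf 2 (top_of_set (Y j))) (g j)"
    and \<alpha>cocycle: "\<And>i. i \<in> {1..m} \<Longrightarrow> cocycle 1 (conf 2 T) (\<alpha> i)"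
    and \<alpha>restr: "\<And>i j. i \<in> {1..m} \<Longrightarrow> j \<in> {1..m} \<Longrightarrow>
        cohomologous 1 (conf 2 (top_of_set (Y j))) (cochain_pullback 1 id (\<alpha> i))
          (if i = j then g j else (\<lambda>_. 0))"
    and tcycle: "singular_relcycle l
        (product_topology (\<lambda>j. conf 2 (top_of_set (Y j))) {1..l}) {} t"
    and tnorm: "kron (cup1 l (\<lambda>j. cochain_pullback 1 (\<lambda>y. y j) (g j))) t = 1"
    and \<sigma>perm: "\<sigma> permutes {1..l}"
    and r: "\<And>j. j \<in> {1..l} \<Longrightarrow> r j \<in> {1..l}"
  shows "let val = kron (cup1 l (\<lambda>i. cochain_pullback 1 (Phi i) (\<alpha> (r i))))
                     (chain_map l (gperm l \<sigma>) (chain_map l (Psi l) t))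
         in if (\<forall>j\<in>{1..l}. r j = \<sigma> j) then val = 1 \<or> val = -1 else val = 0"
proof -
  define B where "B i = (if r i = \<sigma> i then g (\<sigma> i) else (\<lambda>_. 0))" for i
  have lm: "{1..l} \<subseteq> {1..m}"
    using l by auto
  have "kron (cup1 l (\<lambda>i. cochain_pullback 1 (Phi i) (\<alpha> (r i))))
          (chain_map l (gperm l \<sigma>) (chain_map l (Psi l) t))
      = kron (cup1 l (\<lambda>i. cochain_pullback 1 (\<lambda>y. y (\<sigma> i)) (cochain_pullback 1 id (\<alpha> (r i))))) t"
    unfolding cochain_pullback_compose id_comp
    by (rule kron_cup1_gperm_Psi[OF \<sigma>perm, where Z = "\<lambda>j. top_of_set (Y j)"])
      (use tcycle in \<open>simp add: singular_cycle\<close>)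
  also have "\<dots> = kron (cup1 l (\<lambda>i. cochain_pullback 1 (\<lambda>y. y (\<sigma> i)) (B i))) t"
  proof (rule kron_cup1_projections_cohomologous[OF \<sigma>perm tcycle])
    fix k assume k: "k \<in> {1..l}"
    then have m: "\<sigma> k \<in> {1..m}" "r k \<in> {1..m}"
      using permutes_in_image[OF \<sigma>perm, of k] r[OF k] lm by auto
    show "cocycle 1 (conf 2 (top_of_set (Y (\<sigma> k)))) (cochain_pullback 1 id (\<alpha> (r k)))"
      using continuous_map_conf_inclusion[OF Ysub[OF m(1)], folded T_def] \<alpha>cocycle[OF m(2)]
      by (rule cocycle_cochain_pullback)
    show "cocycle 1 (conf 2 (top_of_set (Y (\<sigma> k)))) (B k)"
      using ggen[OF m(1)] by (auto simp: B_def generator_H1_def cocycle_def coboundary_def)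
    show "cohomologous 1 (conf 2 (top_of_set (Y (\<sigma> k)))) (cochain_pullback 1 id (\<alpha> (r k))) (B k)"
      unfolding B_def by (rule \<alpha>restr[OF m(2,1)])
  qed
  finally have val: "kron (cup1 l (\<lambda>i. cochain_pullback 1 (Phi i) (\<alpha> (r i))))
      (chain_map l (gperm l \<sigma>) (chain_map l (Psi l) t))
      = kron (cup1 l (\<lambda>i. cochain_pullback 1 (\<lambda>y. y (\<sigma> i)) (B i))) t" .
  show ?thesis
  proof (cases "\<forall>j\<in>{1..l}. r j = \<sigma> j")
    case True
    then have "kron (cup1 l (\<lambda>i. cochain_pullback 1 (\<lambda>y. y (\<sigma> i)) (B i))) t
        = kron (cup1 l (\<lambda>i. cochain_pullback 1 (\<lambda>y. y (\<sigma> i)) (g (\<sigma> i)))) t"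
      by (intro arg_cong[where f = "\<lambda>\<phi>. kron \<phi> t"] cup1_cong) (simp add: B_def)
    also have "\<dots> = sign \<sigma>"
      using kron_cup1_projections_permute[OF \<sigma>perm tcycle] ggen lm tnorm
      by (auto simp: generator_H1_def)
    finally show ?thesis
      using True val by (cases \<sigma> rule: sign_cases) (simp_all add: Let_def)
  next
    case False
    then obtain j where "j \<in> {1..l}" "r j \<noteq> \<sigma> j"
      by blast
    then have "kron (cup1 l (\<lambda>i. cochain_pullback 1 (\<lambda>y. y (\<sigma> i)) (B i))) t = 0"
      by (intro kron_cup1_zero_factor) (auto simp: B_def cochain_pullback_def)
    with False val show ?thesis
      by (simp add: Let_def)
  qed
qed

end
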